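(* Let $A$ be any of $L_d$, $C_d$ ($d\in\{2,3,\dots\}$), or $L_\infty$. Let $p\in[1,\infty)\setminus\{2\}$, let $(X,\mathcal{B},\mu)$ be a $\sigma$-finite measure space, and let $\rho\colon A\to L(L^p(X,\mu))$ be a representation. (1) If $p>2$, $\rho$ is forward isometric, and $\|\rho(s_\lambda)\|\le\|\lambda\|_p$ for all $\lambda$, then $\rho$ is disjoint. (2) If $p<2$, $\rho$ is strongly forward isometric and $\rho$ is $p$-standard on $\mathrm{span}(s_1,s_2,\dots)$, then $\rho$ is disjoint.
   Context: $L_d$ is the universal complex unital algebra generated by $s_1,\dots,s_d,t_1,\dots,t_d$ with $t_js_j=1$, $t_js_k=0$ ($j\ne k$), $\sum_js_jt_j=1$; $C_d$ has the same generators with only $t_js_j=1$, $t_js_k=0$ ($j\ne k$); $L_\infty$ is on $s_1,s_2,\dots,t_1,t_2,\dots$ with $t_js_j=1$, $t_js_k=0$ ($j\ne k$). A representation is a unital algebra homomorphism into $L(E)$. For $\lambda\in\mathbb{C}^d$ (finitely supported sequences if $A=L_\infty$), $s_\lambda=\sum_j\lambda_js_j$. $\rho$ is forward isometric if each $\rho(s_j)$ is an isometry; strongly forward isometric if moreover every $\rho(s_\lambda)$ is a scalar multiple of an isometry; $p$-standard on $\mathrm{span}(s_j)$ if $\|\rho(s_\lambda)\|=\|\lambda\|_p$ for all $\lambda$; disjoint if there are pairwise disjoint measurable $X_j\subset X$ with $\mathrm{ran}(\rho(s_j))\subset L^p(X_j,\mu)$, where $L^p(E,\mu)$ denotes functions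 vanishing a.e. off $E$. *)

theory Defs
  imports "HOL-Analysis.Analysis"
begin

datatype alg = Ld nat | Cd nat | Linf

fun gens :: "alg \<Rightarrow> nat set" where
  "gens (Ld d) = {..<d}"
| "gens (Cd d) = {..<d}"
| "gens Linf = UNIV"

fun admissible_alg :: "alg \<Rightarrow> bool" where
  "admissible_alg (Ld d) = (d \<ge> 2)"
| "admissible_alg (Cd d) = (d \<ge> 2)"
| "admissible_alg Linf = True"

text \<open>L^p(X,mu) of complex functions; elements are represented by functions,
  identified up to equality almost everywhere.\<close>
definition Lp :: "'a measure \<Rightarrow> real \<Rightarrow> ('a \<Rightarrow> complex) set" where
  "Lp M p = {f. f \<in> borel_measurable M \<and> integrable M (\<lambda>x. norm (f x) powr p)}"

definition Lpnorm :: "'a measure \<Rightarrow> real \<Rightarrow> ('a \<Rightarrow> complex) \<Rightarrow> real" where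
  "Lpnorm M p f = (\<integral>x. norm (f x) powr p \<partial>M) powr (1 / p)"

definition aeq :: "'a measure \<Rightarrow> ('a \<Rightarrow> complex) \<Rightarrow> ('a \<Rightarrow> complex) \<Rightarrow> bool" where
  "aeq M f g = (AE x in M. f x = g x)"

text \<open>Bounded linear operators on L^p(X,mu) (elements of L(L^p(X,mu))),
  represented by maps on functions that respect a.e. equality.\<close>
definition bop :: "'a measure \<Rightarrow> real \<Rightarrow> (('a \<Rightarrow> complex) \<Rightarrow> ('a \<Rightarrow> complex)) \<Rightarrow> bool" where
  "bop M p T =
    ((\<forall>f\<in>Lp M p. T f \<in> Lp M p)
     \<and> (\<forall>f\<in>Lp M p. \<forall>g\<in>Lp M p. aeq M f g \<longrightarrow> aeq M (T f) (T g))
     \<and> (\<forall>f\<in>Lp M p. \<forall>g\<in>Lp M p. \<forall>c::complex.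
          aeq M (T (\<lambda>x. c * f x + g x)) (\<lambda>x. c * T f x + T g x))
     \<and> (\<exists>K. \<forall>f\<in>Lp M p. Lpnorm M p (T f) \<le> K * Lpnorm M p f))"

definition opnorm :: "'a measure \<Rightarrow> real \<Rightarrow> (('a \<Rightarrow> complex) \<Rightarrow> ('a \<Rightarrow> complex)) \<Rightarrow> real" where
  "opnorm M p T = Sup {Lpnorm M p (T f) | f. f \<in> Lp M p \<and> Lpnorm M p f \<le> 1}"

definition isometry_op :: "'a measure \<Rightarrow> real \<Rightarrow> (('a \<Rightarrow> complex) \<Rightarrow> ('a \<Rightarrow> complex)) \<Rightarrow> bool" where
  "isometry_op M p T = (bop M p T \<and> (\<forall>f\<in>Lp M p. Lpnorm M p (T f) = Lpnorm M p f))"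

text \<open>A representation rho of A on L^p(X,mu) is (by the universal property of A)
  the same as a family of operators S j = rho(s_j), T j = rho(t_j) in L(L^p)
  satisfying the defining relations of A.\<close>
definition is_rep :: "alg \<Rightarrow> 'a measure \<Rightarrow> real \<Rightarrow>
    (nat \<Rightarrow> ('a \<Rightarrow> complex) \<Rightarrow> ('a \<Rightarrow> complex)) \<Rightarrow>
    (nat \<Rightarrow> ('a \<Rightarrow> complex) \<Rightarrow> ('a \<Rightarrow> complex)) \<Rightarrow> bool" where
  "is_rep A M p S T =
    ((\<forall>j\<in>gens A. bop M p (S j) \<and> bop M p (T j))
     \<and> (\<forall>j\<in>gens A. \<forall>k\<in>gens A. \<forall>f\<in>Lp M p.
          aeq M (T j (S k f)) (if j = k then f else (\<lambda>_. 0)))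
     \<and> (case A of Ld d \<Rightarrow>
          (\<forall>f\<in>Lp M p. aeq M (\<lambda>x. \<Sum>j\<in>gens A. S j (T j f) x) f)
        | _ \<Rightarrow> True))"

definition coeffs :: "alg \<Rightarrow> (nat \<Rightarrow> complex) \<Rightarrow> bool" where
  "coeffs A lam = (finite {j. lam j \<noteq> 0} \<and> {j. lam j \<noteq> 0} \<subseteq> gens A)"

definition seq_pnorm :: "real \<Rightarrow> (nat \<Rightarrow> complex) \<Rightarrow> real" where
  "seq_pnorm p lam = (\<Sum>j\<in>{j. lam j \<noteq> 0}. norm (lam j) powr p) powr (1 / p)"

definition s_lam :: "(nat \<Rightarrow> ('a \<Rightarrow> complex) \<Rightarrow> ('a \<Rightarrow> complex)) \<Rightarrow> (nat \<Rightarrow> complex) \<Rightarrow>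
    ('a \<Rightarrow> complex) \<Rightarrow> ('a \<Rightarrow> complex)" where
  "s_lam S lam f = (\<lambda>x. \<Sum>j\<in>{j. lam j \<noteq> 0}. lam j * S j f x)"

definition forward_isometric where
  "forward_isometric A M p S = (\<forall>j\<in>gens A. isometry_op M p (S j))"

definition strongly_forward_isometric where
  "strongly_forward_isometric A M p S =
    (forward_isometric A M p S \<and>
     (\<forall>lam. coeffs A lam \<longrightarrow>
        (\<exists>c::complex. \<exists>V. isometry_op M p V \<and>
           (\<forall>f\<in>Lp M p. aeq M (s_lam S lam f) (\<lambda>x. c * V f x)))))"

definition p_standard where
  "p_standard A M p S =
    (\<forall>lam. coeffs A lam \<longrightarrow> opnorm M p (s_lam S lam) = seq_pnorm p lam)"

definition disjoint_rep where
  "disjoint_rep A M p S =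
    (\<exists>X::nat \<Rightarrow> 'a set. (\<forall>j\<in>gens A. X j \<in> sets M) \<and> disjoint_family_on X (gens A)
       \<and> (\<forall>j\<in>gens A. \<forall>f\<in>Lp M p. AE x in M. x \<notin> X j \<longrightarrow> S j f x = 0))"

end

theory Submission
  imports Defs
begin

text \<open>
  For distinct generators \<open>j, k\<close> and a unit vector \<open>f\<close> put \<open>u = S\<^sub>j f\<close>, \<open>v = S\<^sub>k f\<close>;
  both have norm 1 since the \<open>S\<^sub>j\<close> are isometries. The hypotheses on \<open>\<rho>(s\<^sub>\<lambda>)\<close>, applied to
  \<open>\<lambda> = e\<^sub>j \<plusminus> e\<^sub>k\<close>, give \<open>\<parallel>u \<plusminus> v\<parallel>\<^sub>p\<^sup>p \<le> 2\<close> when \<open>p > 2\<close>, and \<open>= 2\<close> when \<open>p < 2\<close>.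
  In both cases \<open>\<parallel>u+v\<parallel>\<^sup>p + \<parallel>u-v\<parallel>\<^sup>p\<close> lies on the wrong side of \<open>2(\<parallel>u\<parallel>\<^sup>p + \<parallel>v\<parallel>\<^sup>p)\<close> for
  Clarkson's inequality, whose pointwise form is strict where \<open>u v \<noteq> 0\<close>; hence \<open>u v = 0\<close> a.e.
  Homogeneity and polarization extend this to \<open>S\<^sub>j f \<cdot> S\<^sub>k g = 0\<close> a.e. for all \<open>f, g\<close>. Finally
  \<open>\<sigma>\<close>-finiteness yields, for each \<open>j\<close>, a measurable essential support \<open>X\<^sub>j\<close> of the range of
  \<open>S\<^sub>j\<close> (a countable union of supports), and these are disjoint up to a null set.
\<close>

lemma powr_concave:
  assumes "0 < q" "q \<le> 1"
  shows "concave_on {0<..} (\<lambda>x::real. x powr q)"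
proof (rule f''_le0_imp_concave[where f'="\<lambda>x. q * x powr (q - 1)"
                                  and f''="\<lambda>x. q * ((q - 1) * x powr (q - 2))"])
  fix x :: real assume x: "x \<in> {0<..}"
  show "((\<lambda>x. x powr q) has_real_derivative q * x powr (q - 1)) (at x)"
    using x by (auto intro!: derivative_eq_intros)
  show "((\<lambda>x. q * x powr (q - 1)) has_real_derivative q * ((q - 1) * x powr (q - 2))) (at x)"
    using x by (auto intro!: derivative_eq_intros simp: algebra_simps)
  show "q * ((q - 1) * x powr (q - 2)) \<le> 0"
    using assms x by (intro mult_nonneg_nonpos mult_nonpos_nonneg) auto
qed auto

lemma powr_midpoint_convex:
  fixes a b q :: real
  assumes "1 \<le> q" "0 \<le> a" "0 \<le> b"
  shows "2 * ((a + b) / 2) powr q \<le> a powr q + b powr q"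
proof (cases "a = 0 \<or> b = 0")
  case True
  have "2 \<le> (2::real) powr q" using powr_mono[OF assms(1), of 2] by simp
  then have "2 * (c / 2) powr q \<le> c powr q" if "0 \<le> c" for c :: real
    using that mult_left_mono[of 2 "2 powr q" "c powr q"] by (simp add: powr_divide field_simps)
  then show ?thesis using True assms by auto
next
  case False
  have "((1 - 1/2) *\<^sub>R a + (1/2) *\<^sub>R b) powr q \<le> (1 - 1/2) * a powr q + (1/2) * b powr q"
    by (rule convex_onD[OF powr_convex[OF assms(1)]]) (use assms False in auto)
  then show ?thesis by (simp add: field_simps)
qed

lemma powr_midpoint_concave:
  fixes a b q :: real
  assumes "0 < q" "q \<le> 1" "0 \<le> a" "0 \<le> b"
  shows "a powr q + b powr q \<le> 2 * ((a + b) / 2) powr q"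
proof (cases "a = 0 \<or> b = 0")
  case True
  have "(2::real) powr q \<le> 2" using powr_mono[OF assms(2), of 2] by simp
  then have "c powr q \<le> 2 * (c / 2) powr q" if "0 \<le> c" for c :: real
    using that mult_left_mono[of "2 powr q" 2 "c powr q"] by (simp add: powr_divide field_simps)
  then show ?thesis using True assms by auto
next
  case False
  have "(1 - 1/2) * a powr q + (1/2) * b powr q \<le> ((1 - 1/2) *\<^sub>R a + (1/2) *\<^sub>R b) powr q"
    by (rule concave_onD[OF powr_concave[OF assms(1,2)]]) (use assms False in auto)
  then show ?thesis by (simp add: field_simps)
qed

text \<open>Strict superadditivity of \<open>x powr q\<close> for \<open>q > 1\<close> and strict subadditivity for
  \<open>0 < q < 1\<close>: compare \<open>x powr q = x * x powr (q - 1)\<close> with \<open>x * (x + y) powr (q - 1)\<close>.\<close>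
lemma powr_strict_superadditive:
  fixes x y q :: real
  assumes "1 < q" "0 < x" "0 < y"
  shows "x powr q + y powr q < (x + y) powr q"
proof -
  have "x powr q + y powr q = x * x powr (q - 1) + y * y powr (q - 1)"
    using assms by (simp add: powr_mult_base)
  also have "\<dots> < x * (x + y) powr (q - 1) + y * (x + y) powr (q - 1)"
    using assms by (intro add_strict_mono mult_strict_left_mono powr_less_mono2) auto
  also have "\<dots> = (x + y) * (x + y) powr (q - 1)"
    by (simp add: distrib_right)
  also have "\<dots> = (x + y) powr q"
    using assms by (simp add: powr_mult_base)
  finally show ?thesis .
qed

lemma powr_strict_subadditive:
  fixes x y q :: real
  assumes "0 < q" "q < 1" "0 < x" "0 < y"
  shows "(x + y) powr q < x powr q + y powr q"
proof -
  have "(x + y) powr q = (x + y) * (x + y) powr (q - 1)"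
    using assms by (simp add: powr_mult_base)
  also have "\<dots> = x * (x + y) powr (q - 1) + y * (x + y) powr (q - 1)"
    by (simp add: distrib_right)
  also have "\<dots> < x * x powr (q - 1) + y * y powr (q - 1)"
    using assms by (intro add_strict_mono mult_strict_left_mono powr_less_mono2_neg) auto
  also have "\<dots> = x powr q + y powr q"
    using assms by (simp add: powr_mult_base)
  finally show ?thesis .
qed

text \<open>For \<open>p \<noteq> 2\<close> it
  has the sign of \<open>p - 2\<close>, strictly unless \<open>u\<close> or \<open>v\<close> is zero: writing \<open>q = p/2\<close>, compare
  \<open>|u|^p + |v|^p\<close> with \<open>(|u|\<^sup>2 + |v|\<^sup>2)^q\<close> (strict super-/subadditivity) and the latter with
  the mean of \<open>|u \<plusminus> v|^p\<close> (midpoint convexity/concavity plus the parallelogram law).\<close>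
definition clarkson_defect :: "real \<Rightarrow> complex \<Rightarrow> complex \<Rightarrow> real" where
  "clarkson_defect p u v =
     cmod (u + v) powr p + cmod (u - v) powr p - 2 * (cmod u powr p + cmod v powr p)"

text \<open>Rewriting \<open>x powr p\<close> as a power of \<open>x\<^sup>2\<close>, to bring in the parallelogram law.\<close>
lemma powr_via_square: "0 \<le> (x::real) \<Longrightarrow> x powr p = (x\<^sup>2) powr (p / 2)"
  by (cases "x = 0") (simp_all add: powr_powr flip: powr_numeral)

lemma clarkson_defect_pos:
  assumes "0 < p" "p \<noteq> 2" "u \<noteq> 0" "v \<noteq> 0"
  shows "0 < (p - 2) * clarkson_defect p u v"
proof -
  define q where "q = p / 2"
  define s where "s = (cmod u)\<^sup>2 + (cmod v)\<^sup>2"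
  have parallelogram: "((cmod (u + v))\<^sup>2 + (cmod (u - v))\<^sup>2) / 2 = s"
    unfolding s_def cmod_power2 by (simp add: power2_eq_square algebra_simps)
  have as_q: "cmod z powr p = ((cmod z)\<^sup>2) powr q" for z
    unfolding q_def by (rule powr_via_square) simp
  have pos: "0 < (cmod u)\<^sup>2" "0 < (cmod v)\<^sup>2" using assms by auto
  show ?thesis
  proof (cases "p > 2")
    case True
    have "cmod u powr p + cmod v powr p < s powr q"
      unfolding as_q s_def using True pos q_def by (intro powr_strict_superadditive) auto
    also have "2 * s powr q \<le> cmod (u + v) powr p + cmod (u - v) powr p"
      unfolding as_q parallelogram[symmetric] using True q_def
      by (intro powr_midpoint_convex) auto
    finally show ?thesis using True by (simp add: clarkson_defect_def)
  next
    case False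
    then have "p < 2" using assms by simp
    have "cmod (u + v) powr p + cmod (u - v) powr p \<le> 2 * s powr q"
      unfolding as_q parallelogram[symmetric] using \<open>p < 2\<close> assms q_def
      by (intro powr_midpoint_concave) auto
    also have "s powr q < cmod u powr p + cmod v powr p"
      unfolding as_q s_def using \<open>p < 2\<close> assms pos q_def by (intro powr_strict_subadditive) auto
    finally show ?thesis using \<open>p < 2\<close> by (intro mult_neg_neg) (simp_all add: clarkson_defect_def)
  qed
qed

lemma clarkson_defect_nonneg:
  assumes "0 < p" "p \<noteq> 2"
  shows "0 \<le> (p - 2) * clarkson_defect p u v"
proof (cases "u = 0 \<or> v = 0")
  case True
  then show ?thesis by (auto simp: clarkson_defect_def norm_minus_commute)
next
  case False
  then show ?thesis using clarkson_defect_pos[OF assms, of u v] by simp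
qed

lemma Lp_measurable: "f \<in> Lp M p \<Longrightarrow> f \<in> borel_measurable M"
  by (simp add: Lp_def)

lemma Lp_integrable: "f \<in> Lp M p \<Longrightarrow> integrable M (\<lambda>x. cmod (f x) powr p)"
  by (simp add: Lp_def)

lemma powr_norm_add_le:
  fixes a b :: complex assumes "0 \<le> p"
  shows "cmod (a + b) powr p \<le> 2 powr p * (cmod a powr p + cmod b powr p)"
proof -
  have "cmod (a + b) powr p \<le> (2 * max (cmod a) (cmod b)) powr p"
    using assms norm_triangle_ineq[of a b] by (intro powr_mono2) auto
  also have "\<dots> = 2 powr p * max (cmod a) (cmod b) powr p" by (simp add: powr_mult)
  also have "\<dots> \<le> 2 powr p * (cmod a powr p + cmod b powr p)"
    by (intro mult_left_mono) (auto simp: max_def)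
  finally show ?thesis .
qed

lemma Lp_zero: "(\<lambda>x. 0) \<in> Lp M p"
  by (simp add: Lp_def)

lemma Lp_add:
  assumes "0 \<le> p" "f \<in> Lp M p" "g \<in> Lp M p"
  shows "(\<lambda>x. f x + g x) \<in> Lp M p"
proof -
  have "integrable M (\<lambda>x. 2 powr p * (cmod (f x) powr p + cmod (g x) powr p))"
    using assms Lp_integrable by (intro integrable_mult_right Bochner_Integration.integrable_add)
  then have "integrable M (\<lambda>x. cmod (f x + g x) powr p)"
    by (rule Bochner_Integration.integrable_bound)
       (use Lp_measurable[OF assms(2)] Lp_measurable[OF assms(3)] powr_norm_add_le[OF assms(1)]
         in auto)
  then show ?thesis using Lp_measurable[OF assms(2)] Lp_measurable[OF assms(3)]
    by (simp add: Lp_def)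
qed

lemma Lp_scale:
  assumes "0 \<le> p" "f \<in> Lp M p"
  shows "(\<lambda>x. c * f x) \<in> Lp M p"
proof -
  have "integrable M (\<lambda>x. cmod c powr p * cmod (f x) powr p)"
    using assms Lp_integrable by (intro integrable_mult_right)
  then show ?thesis using Lp_measurable[OF assms(2)] by (simp add: Lp_def norm_mult powr_mult)
qed

lemma Lp_diff:
  assumes "0 \<le> p" "f \<in> Lp M p" "g \<in> Lp M p"
  shows "(\<lambda>x. f x - g x) \<in> Lp M p"
  using Lp_add[OF assms(1,2) Lp_scale[OF assms(1,3), of "-1"]] by simp

lemma Lpnorm_nonneg: "0 \<le> Lpnorm M p f"
  by (simp add: Lpnorm_def)

lemma Lpnorm_powr:
  assumes "0 < p"
  shows "Lpnorm M p f powr p = (\<integral>x. cmod (f x) powr p \<partial>M)"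
  using assms by (simp add: Lpnorm_def powr_powr Bochner_Integration.integral_nonneg)

lemma Lpnorm_scale:
  assumes "0 < p"
  shows "Lpnorm M p (\<lambda>x. c * f x) = cmod c * Lpnorm M p f"
  using assms
  by (simp add: Lpnorm_def norm_mult powr_mult powr_powr Bochner_Integration.integral_nonneg)

lemma Lpnorm_cong_AE:
  assumes "f \<in> borel_measurable M" "g \<in> borel_measurable M" "AE x in M. f x = g x"
  shows "Lpnorm M p f = Lpnorm M p g"
  unfolding Lpnorm_def using assms by (subst integral_cong_AE) auto

lemma Lpnorm_eq_0_imp_AE:
  assumes "0 < p" "f \<in> Lp M p" "Lpnorm M p f = 0"
  shows "AE x in M. f x = 0"
proof -
  have "(\<integral>x. cmod (f x) powr p \<partial>M) = 0"
    using Lpnorm_powr[OF assms(1), of M f] assms(1,3) by simp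
  then have "AE x in M. cmod (f x) powr p = 0"
    using Lp_integrable[OF assms(2)] by (subst (asm) integral_nonneg_eq_0_iff_AE) auto
  then show ?thesis by eventually_elim simp
qed

lemma bop_Lp: "bop M p T \<Longrightarrow> f \<in> Lp M p \<Longrightarrow> T f \<in> Lp M p"
  by (simp add: bop_def)

lemma bop_cong_AE:
  "bop M p T \<Longrightarrow> f \<in> Lp M p \<Longrightarrow> g \<in> Lp M p \<Longrightarrow> AE x in M. f x = g x
   \<Longrightarrow> AE x in M. T f x = T g x"
  by (simp add: bop_def aeq_def)

lemma bop_linear:
  "bop M p T \<Longrightarrow> f \<in> Lp M p \<Longrightarrow> g \<in> Lp M p
   \<Longrightarrow> AE x in M. T (\<lambda>x. c * f x + g x) x = c * T f x + T g x"
  by (simp add: bop_def aeq_def)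

lemma bop_zero:
  assumes "bop M p T"
  shows "AE x in M. T (\<lambda>x. 0) x = 0"
  using bop_linear[OF assms Lp_zero Lp_zero, of 1] by eventually_elim simp

lemma bop_add:
  assumes "bop M p T" "f \<in> Lp M p" "g \<in> Lp M p"
  shows "AE x in M. T (\<lambda>x. f x + g x) x = T f x + T g x"
  using bop_linear[OF assms, of 1] by simp

lemma bop_scale:
  assumes "bop M p T" "f \<in> Lp M p"
  shows "AE x in M. T (\<lambda>x. c * f x) x = c * T f x"
  using bop_linear[OF assms Lp_zero, of c] bop_zero[OF assms(1)] by eventually_elim simp

text \<open>Equality case of Clarkson's inequality: integrating the pointwise Clarkson defect, if
  \<open>\<integral>|u+v|^p + \<integral>|u-v|^p\<close> lies on the "wrong" side of \<open>2(\<integral>|u|^p + \<integral>|v|^p)\<close> (for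
  \<open>p \<noteq> 2\<close>), then the defect vanishes a.e., so \<open>u\<close> and \<open>v\<close> have a.e. disjoint supports.\<close>
lemma Lp_clarkson_equality:
  assumes p: "0 < p" "p \<noteq> 2" and u: "u \<in> Lp M p" and v: "v \<in> Lp M p"
    and reversed: "(p - 2) * ((\<integral>x. cmod (u x + v x) powr p \<partial>M) + (\<integral>x. cmod (u x - v x) powr p \<partial>M)
                     - 2 * ((\<integral>x. cmod (u x) powr p \<partial>M) + (\<integral>x. cmod (v x) powr p \<partial>M))) \<le> 0"
  shows "AE x in M. u x * v x = 0"
proof -
  define G where "G x = (p - 2) * clarkson_defect p (u x) (v x)" for x
  have ints: "integrable M (\<lambda>x. cmod (u x + v x) powr p)" "integrable M (\<lambda>x. cmod (u x - v x) powr p)"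
    "integrable M (\<lambda>x. cmod (u x) powr p)" "integrable M (\<lambda>x. cmod (v x) powr p)"
    using p Lp_integrable Lp_add[OF _ u v] Lp_diff[OF _ u v] u v by auto
  have G_nonneg: "0 \<le> G x" for x
    unfolding G_def by (rule clarkson_defect_nonneg[OF p])
  have "integral\<^sup>L M G \<le> 0"
    using reversed ints unfolding G_def clarkson_defect_def by simp
  moreover have "0 \<le> integral\<^sup>L M G"
    by (intro Bochner_Integration.integral_nonneg) (rule G_nonneg)
  ultimately have "integral\<^sup>L M G = 0" by simp
  moreover have "integrable M G"
    using ints unfolding G_def clarkson_defect_def by simp
  ultimately have "AE x in M. G x = 0"
    using G_nonneg by (subst (asm) integral_nonneg_eq_0_iff_AE) auto
  then show ?thesis
  proof eventually_elim
    case (elim x)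
    show ?case
    proof (rule ccontr)
      assume "u x * v x \<noteq> 0"
      then have "0 < G x" using clarkson_defect_pos[OF p, of "u x" "v x"] by (simp add: G_def)
      then show False using elim by simp
    qed
  qed
qed

lemma Lpnorm_le_opnorm:
  assumes "f \<in> Lp M p" "Lpnorm M p f \<le> 1"
    and bounded: "\<And>g. g \<in> Lp M p \<Longrightarrow> Lpnorm M p g \<le> 1 \<Longrightarrow> Lpnorm M p (T g) \<le> B"
  shows "Lpnorm M p (T f) \<le> opnorm M p T"
  unfolding opnorm_def
  by (rule cSup_upper) (use assms in \<open>auto intro!: bdd_aboveI[where M=B]\<close>)

lemma opnorm_of_scaled_isometry:
  assumes "f \<in> Lp M p" "Lpnorm M p f = 1" "0 \<le> a"
    and scaled: "\<And>g. g \<in> Lp M p \<Longrightarrow> Lpnorm M p (T g) = a * Lpnorm M p g"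
  shows "opnorm M p T = a"
  unfolding opnorm_def
proof (rule cSup_eq_maximum)
  show "a \<in> {Lpnorm M p (T f) |f. f \<in> Lp M p \<and> Lpnorm M p f \<le> 1}"
    using assms by force
  fix y assume "y \<in> {Lpnorm M p (T f) |f. f \<in> Lp M p \<and> Lpnorm M p f \<le> 1}"
  then obtain g where "g \<in> Lp M p" "Lpnorm M p g \<le> 1" "y = Lpnorm M p (T g)" by auto
  then show "y \<le> a" using scaled assms(3) mult_left_mono[of "Lpnorm M p g" 1 a] by auto
qed

definition pair_vec :: "nat \<Rightarrow> nat \<Rightarrow> complex \<Rightarrow> nat \<Rightarrow> complex" where
  "pair_vec j k c = (\<lambda>i. if i = j then 1 else if i = k then c else 0)"

lemma pair_vec_support: "j \<noteq> k \<Longrightarrow> c \<noteq> 0 \<Longrightarrow> {i. pair_vec j k c i \<noteq> 0} = {j, k}"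
  by (auto simp: pair_vec_def)

lemma s_lam_pair_vec:
  "j \<noteq> k \<Longrightarrow> c \<noteq> 0 \<Longrightarrow> s_lam S (pair_vec j k c) = (\<lambda>f x. S j f x + c * S k f x)"
  by (intro ext) (simp add: s_lam_def pair_vec_support, simp add: pair_vec_def)

lemma coeffs_pair_vec:
  "j \<in> gens A \<Longrightarrow> k \<in> gens A \<Longrightarrow> j \<noteq> k \<Longrightarrow> c \<noteq> 0 \<Longrightarrow> coeffs A (pair_vec j k c)"
  by (simp add: coeffs_def pair_vec_support)

lemma seq_pnorm_pair_vec:
  assumes "j \<noteq> k" "cmod c = 1"
  shows "seq_pnorm p (pair_vec j k c) = 2 powr (1 / p)"
proof -
  have "c \<noteq> 0" using assms(2) by auto
  then show ?thesis
    using assms by (simp add: seq_pnorm_def pair_vec_support) (simp add: pair_vec_def)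
qed

text \<open>A crude a priori bound for \<open>S\<^sub>1 + c S\<^sub>2\<close> with isometries \<open>S\<^sub>1, S\<^sub>2\<close> and \<open>|c| = 1\<close>; it is
  only needed to know that the supremum defining the operator norm is finite.\<close>
lemma isometry_pair_bounded:
  assumes p: "0 < p" and iso: "isometry_op M p S1" "isometry_op M p S2"
    and c: "cmod c = 1" and g: "g \<in> Lp M p" "Lpnorm M p g \<le> 1"
  shows "Lpnorm M p (\<lambda>x. S1 g x + c * S2 g x) \<le> (2 powr p * 2) powr (1 / p)"
proof -
  have u: "S1 g \<in> Lp M p" and v: "(\<lambda>x. c * S2 g x) \<in> Lp M p"
    using iso g p by (auto simp: isometry_op_def bop_def intro: Lp_scale)
  have norms: "Lpnorm M p (S1 g) = Lpnorm M p g" "Lpnorm M p (\<lambda>x. c * S2 g x) = Lpnorm M p g"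
    using iso g c by (auto simp: isometry_op_def Lpnorm_scale[OF p])
  have "(\<integral>x. cmod (S1 g x + c * S2 g x) powr p \<partial>M)
      \<le> (\<integral>x. 2 powr p * (cmod (S1 g x) powr p + cmod (c * S2 g x) powr p) \<partial>M)"
    using Lp_integrable[OF Lp_add[OF _ u v]] Lp_integrable[OF u] Lp_integrable[OF v] p
      powr_norm_add_le[of p]
    by (intro integral_mono integrable_mult_right Bochner_Integration.integrable_add) auto
  also have "\<dots> = 2 powr p * (Lpnorm M p (S1 g) powr p + Lpnorm M p (\<lambda>x. c * S2 g x) powr p)"
    using Lp_integrable[OF u] Lp_integrable[OF v] by (simp add: Lpnorm_powr[OF p])
  also have "\<dots> = 2 powr p * (Lpnorm M p g powr p + Lpnorm M p g powr p)"
    by (simp only: norms)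
  also have "\<dots> \<le> 2 powr p * 2"
    using g p Lpnorm_nonneg[of M p g] powr_mono2[of p "Lpnorm M p g" 1] by simp
  finally show ?thesis
    unfolding Lpnorm_def using p by (intro powr_mono2) (auto intro: Bochner_Integration.integral_nonneg)
qed

lemma pair_norm_le_of_contractive:
  assumes p: "0 < p" and fi: "forward_isometric A M p S"
    and contr: "\<forall>lam. coeffs A lam \<longrightarrow> opnorm M p (s_lam S lam) \<le> seq_pnorm p lam"
    and jk: "j \<in> gens A" "k \<in> gens A" "j \<noteq> k" and c: "cmod c = 1"
    and f: "f \<in> Lp M p" "Lpnorm M p f = 1"
  shows "Lpnorm M p (\<lambda>x. S j f x + c * S k f x) \<le> 2 powr (1 / p)"
proof -
  have c0: "c \<noteq> 0" using c by auto
  have iso: "isometry_op M p (S j)" "isometry_op M p (S k)"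
    using fi jk by (auto simp: forward_isometric_def)
  have "Lpnorm M p (\<lambda>x. S j f x + c * S k f x) \<le> opnorm M p (s_lam S (pair_vec j k c))"
    unfolding s_lam_pair_vec[OF jk(3) c0]
    by (rule Lpnorm_le_opnorm) (use f isometry_pair_bounded[OF p iso c] in auto)
  also have "\<dots> \<le> seq_pnorm p (pair_vec j k c)"
    using contr coeffs_pair_vec[OF jk c0] by blast
  also have "\<dots> = 2 powr (1 / p)"
    by (rule seq_pnorm_pair_vec[OF jk(3) c])
  finally show ?thesis .
qed

text \<open>Under the hypotheses of part (2), \<open>S\<^sub>j + c S\<^sub>k\<close> is a multiple \<open>a V\<close> of an isometry, and
  \<open>p\<close>-standardness forces \<open>|a| = 2^(1/p)\<close>; hence \<open>\<parallel>S\<^sub>j f + c S\<^sub>k f\<parallel> = 2^(1/p)\<close> for unit \<open>f\<close>.\<close>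
lemma pair_norm_eq_of_standard:
  assumes p: "0 < p" and sfi: "strongly_forward_isometric A M p S"
    and std: "p_standard A M p S"
    and jk: "j \<in> gens A" "k \<in> gens A" "j \<noteq> k" and c: "cmod c = 1"
    and f: "f \<in> Lp M p" "Lpnorm M p f = 1"
  shows "Lpnorm M p (\<lambda>x. S j f x + c * S k f x) = 2 powr (1 / p)"
proof -
  have c0: "c \<noteq> 0" using c by auto
  have bops: "bop M p (S j)" "bop M p (S k)"
    using sfi jk by (auto simp: strongly_forward_isometric_def forward_isometric_def isometry_op_def)
  have coeffs: "coeffs A (pair_vec j k c)" by (rule coeffs_pair_vec[OF jk c0])
  obtain a V where V: "isometry_op M p V"
    and aV: "\<forall>g\<in>Lp M p. aeq M (s_lam S (pair_vec j k c) g) (\<lambda>x. a * V g x)"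
    using sfi coeffs unfolding strongly_forward_isometric_def by blast
  have scaled: "Lpnorm M p (\<lambda>x. S j g x + c * S k g x) = cmod a * Lpnorm M p g"
    if g: "g \<in> Lp M p" for g
  proof -
    have "Lpnorm M p (\<lambda>x. S j g x + c * S k g x) = Lpnorm M p (\<lambda>x. a * V g x)"
    proof (rule Lpnorm_cong_AE)
      show "(\<lambda>x. S j g x + c * S k g x) \<in> borel_measurable M"
        using Lp_add[OF _ bop_Lp[OF bops(1) g] Lp_scale[OF _ bop_Lp[OF bops(2) g]]] p
        by (auto intro: Lp_measurable)
      show "(\<lambda>x. a * V g x) \<in> borel_measurable M"
        using Lp_scale[OF _ bop_Lp[OF _ g]] V p by (auto intro: Lp_measurable simp: isometry_op_def)
      show "AE x in M. S j g x + c * S k g x = a * V g x"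
        using aV g by (simp add: aeq_def s_lam_pair_vec[OF jk(3) c0])
    qed
    also have "\<dots> = cmod a * Lpnorm M p g"
      using V g by (simp add: Lpnorm_scale[OF p] isometry_op_def)
    finally show ?thesis .
  qed
  have "cmod a = opnorm M p (s_lam S (pair_vec j k c))"
    unfolding s_lam_pair_vec[OF jk(3) c0]
    by (rule opnorm_of_scaled_isometry[OF f, symmetric]) (use scaled in auto)
  also have "\<dots> = 2 powr (1 / p)"
    using std coeffs seq_pnorm_pair_vec[OF jk(3) c] by (simp add: p_standard_def)
  finally show ?thesis using scaled[OF f(1)] f(2) by simp
qed

lemma orthogonal_of_pair_norms:
  assumes p: "0 < p" "p \<noteq> 2" and iso: "isometry_op M p Sj" "isometry_op M p Sk"
    and f: "f \<in> Lp M p" "Lpnorm M p f = 1"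
    and reversed: "(p - 2) * (Lpnorm M p (\<lambda>x. Sj f x + Sk f x) powr p
                             + Lpnorm M p (\<lambda>x. Sj f x - Sk f x) powr p - 4) \<le> 0"
  shows "AE x in M. Sj f x * Sk f x = 0"
proof -
  have u: "Sj f \<in> Lp M p" and v: "Sk f \<in> Lp M p"
    using iso f by (auto simp: isometry_op_def bop_def)
  have "(\<integral>x. cmod (S f x) powr p \<partial>M) = 1" if "isometry_op M p S" for S
    using that f by (simp add: isometry_op_def flip: Lpnorm_powr[OF p(1)])
  then have "(p - 2) * ((\<integral>x. cmod (Sj f x + Sk f x) powr p \<partial>M) + (\<integral>x. cmod (Sj f x - Sk f x) powr p \<partial>M)
      - 2 * ((\<integral>x. cmod (Sj f x) powr p \<partial>M) + (\<integral>x. cmod (Sk f x) powr p \<partial>M))) \<le> 0"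
    using reversed iso by (simp add: Lpnorm_powr[OF p(1)])
  then show ?thesis by (rule Lp_clarkson_equality[OF p u v])
qed

text \<open>Part (1), for a unit vector: for \<open>p > 2\<close> the bounds \<open>\<parallel>S\<^sub>j f \<plusminus> S\<^sub>k f\<parallel>\<^sup>p \<le> 2\<close> are the reversed
  Clarkson inequality.\<close>
lemma unit_orthogonal_gt2:
  assumes p: "2 < p" and fi: "forward_isometric A M p S"
    and contr: "\<forall>lam. coeffs A lam \<longrightarrow> opnorm M p (s_lam S lam) \<le> seq_pnorm p lam"
    and jk: "j \<in> gens A" "k \<in> gens A" "j \<noteq> k"
    and f: "f \<in> Lp M p" "Lpnorm M p f = 1"
  shows "AE x in M. S j f x * S k f x = 0"
proof (rule orthogonal_of_pair_norms[where Sj = "S j" and Sk = "S k"])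
  show p': "0 < p" "p \<noteq> 2" using p by auto
  show "isometry_op M p (S j)" "isometry_op M p (S k)"
    using fi jk by (auto simp: forward_isometric_def)
  have "Lpnorm M p (\<lambda>x. S j f x + c * S k f x) powr p \<le> 2" if "cmod c = 1" for c
  proof -
    have "Lpnorm M p (\<lambda>x. S j f x + c * S k f x) powr p \<le> (2 powr (1 / p)) powr p"
      using pair_norm_le_of_contractive[OF p'(1) fi contr jk that f] p'
      by (intro powr_mono2) (auto simp: Lpnorm_nonneg)
    then show ?thesis using p' by (simp add: powr_powr)
  qed
  from this[of 1] this[of "-1"]
  show "(p - 2) * (Lpnorm M p (\<lambda>x. S j f x + S k f x) powr p
                  + Lpnorm M p (\<lambda>x. S j f x - S k f x) powr p - 4) \<le> 0"
    using p by (intro mult_nonneg_nonpos) auto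
qed (use f in auto)

text \<open>Part (2), for a unit vector: for \<open>p < 2\<close> the identities \<open>\<parallel>S\<^sub>j f \<plusminus> S\<^sub>k f\<parallel>\<^sup>p = 2\<close> give
  equality in Clarkson's inequality.\<close>
lemma unit_orthogonal_lt2:
  assumes p: "1 \<le> p" "p < 2" and sfi: "strongly_forward_isometric A M p S"
    and std: "p_standard A M p S"
    and jk: "j \<in> gens A" "k \<in> gens A" "j \<noteq> k"
    and f: "f \<in> Lp M p" "Lpnorm M p f = 1"
  shows "AE x in M. S j f x * S k f x = 0"
proof (rule orthogonal_of_pair_norms[where Sj = "S j" and Sk = "S k"])
  show p': "0 < p" "p \<noteq> 2" using p by auto
  show "isometry_op M p (S j)" "isometry_op M p (S k)"
    using sfi jk by (auto simp: strongly_forward_isometric_def forward_isometric_def)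
  have "Lpnorm M p (\<lambda>x. S j f x + c * S k f x) powr p = 2" if "cmod c = 1" for c
    using pair_norm_eq_of_standard[OF p'(1) sfi std jk that f] p' by (simp add: powr_powr)
  from this[of 1] this[of "-1"]
  show "(p - 2) * (Lpnorm M p (\<lambda>x. S j f x + S k f x) powr p
                  + Lpnorm M p (\<lambda>x. S j f x - S k f x) powr p - 4) \<le> 0"
    by simp
qed (use f in auto)

lemma orthogonal_of_unit_orthogonal:
  assumes p: "0 < p" and bops: "bop M p Sj" "bop M p Sk"
    and unit: "\<And>f. f \<in> Lp M p \<Longrightarrow> Lpnorm M p f = 1 \<Longrightarrow> AE x in M. Sj f x * Sk f x = 0"
    and f: "f \<in> Lp M p"
  shows "AE x in M. Sj f x * Sk f x = 0"
proof (cases "Lpnorm M p f = 0")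
  case True
  then have "AE x in M. f x = 0" using Lpnorm_eq_0_imp_AE[OF p f] by simp
  then have "AE x in M. Sj f x = Sj (\<lambda>x. 0) x" by (rule bop_cong_AE[OF bops(1) f Lp_zero])
  with bop_zero[OF bops(1)] show ?thesis by eventually_elim simp
next
  case False
  define r where "r = Lpnorm M p f"
  have r: "0 < r" using False Lpnorm_nonneg[of M p f] by (simp add: r_def)
  define g where "g = (\<lambda>x. complex_of_real (1 / r) * f x)"
  have g: "g \<in> Lp M p" unfolding g_def using p f by (intro Lp_scale) auto
  have "Lpnorm M p g = cmod (complex_of_real (1 / r)) * r"
    unfolding g_def r_def by (rule Lpnorm_scale[OF p])
  then have g_orth: "AE x in M. Sj g x * Sk g x = 0" using r unit[OF g] by (simp add: norm_divide)
  have f_eq: "f = (\<lambda>x. complex_of_real r * g x)" using r by (auto simp: g_def)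
  show ?thesis
    using g_orth bop_scale[OF bops(1) g, of r] bop_scale[OF bops(2) g, of r]
    unfolding f_eq by eventually_elim auto
qed

text \<open>The algebra behind polarization: if \<open>aa' = bb' = (a+b)(a'+b') = 0\<close> then
  \<open>(ab')\<^sup>2 = -(aa')(bb') = 0\<close>.\<close>
lemma product_cross_term_zero:
  fixes a a' b b' :: "'a :: idom"
  assumes "a * a' = 0" "b * b' = 0" "(a + b) * (a' + b') = 0"
  shows "a * b' = 0"
proof -
  have "(a + b) * (a' + b') = a * a' + (a * b' + b * a') + b * b'" by (simp add: algebra_simps)
  then have "a * b' + b * a' = 0" using assms by simp
  then have "a * b' = - (b * a')" by (simp add: eq_neg_iff_add_eq_0)
  then have "(a * b') * (a * b') = (a * b') * - (b * a')" by (rule arg_cong)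
  also have "\<dots> = - ((a * a') * (b * b'))" by (simp add: algebra_simps)
  finally show ?thesis using assms by simp
qed

lemma orthogonal_polarize:
  assumes p: "0 \<le> p" and bops: "bop M p Sj" "bop M p Sk"
    and diag: "\<And>h. h \<in> Lp M p \<Longrightarrow> AE x in M. Sj h x * Sk h x = 0"
    and f: "f \<in> Lp M p" and g: "g \<in> Lp M p"
  shows "AE x in M. Sj f x * Sk g x = 0"
  using diag[OF f] diag[OF g] diag[OF Lp_add[OF p f g]] bop_add[OF bops(1) f g] bop_add[OF bops(2) f g]
  by eventually_elim (auto intro: product_cross_term_zero)

text \<open>Essential union in a finite measure space: a nonempty family of measurable sets closed
  under countable unions has a member \<open>U\<close> containing every member up to a null set.
  \<open>U\<close> is obtained as a countable union of members whose measures approach the supremum.\<close>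
lemma finite_measure_essential_union:
  assumes N: "finite_measure N" and C: "C \<subseteq> sets N" "C \<noteq> {}"
    and closed: "\<And>B :: nat \<Rightarrow> 'a set. range B \<subseteq> C \<Longrightarrow> (\<Union>n. B n) \<in> C"
  shows "\<exists>U\<in>C. \<forall>D\<in>C. D - U \<in> null_sets N"
proof -
  interpret finite_measure N by (fact N)
  define s where "s = (SUP B\<in>C. measure N B)"
  have bdd: "bdd_above (measure N ` C)"
    by (intro bdd_aboveI[where M = "measure N (space N)"]) (auto intro: bounded_measure)
  have "\<exists>B\<in>C. s - 1 / Suc n < measure N B" for n :: nat
    unfolding s_def using C(2) bdd by (subst less_cSUP_iff[symmetric]) auto
  then obtain B where B: "\<And>n. B n \<in> C" "\<And>n. s - 1 / Suc n < measure N (B n)"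
    by metis
  define U where "U = (\<Union>n. B n)"
  have U: "U \<in> C" unfolding U_def by (rule closed) (use B(1) in auto)
  have U_le: "measure N U \<le> s"
    unfolding s_def by (rule cSUP_upper[OF U bdd])
  have U_ge: "s \<le> measure N U"
  proof (rule ccontr)
    assume "\<not> s \<le> measure N U"
    then obtain n where "inverse (real (Suc n)) < s - measure N U"
      using reals_Archimedean[of "s - measure N U"] by auto
    moreover have "measure N (B n) \<le> measure N U"
      using B(1) U C(1) by (intro finite_measure_mono) (auto simp: U_def)
    ultimately show False using B(2)[of n] unfolding inverse_eq_divide by linarith
  qed
  have "D - U \<in> null_sets N" if D: "D \<in> C" for D
  proof -
    have "(\<Union>n::nat. if n = 0 then D else U) \<in> C" using D U by (intro closed) auto
    moreover have "(\<Union>n::nat. if n = 0 then D else U) = U \<union> (D - U)" by (auto split: if_splits)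
    ultimately have "measure N (U \<union> (D - U)) \<le> s"
      unfolding s_def by (metis bdd cSUP_upper)
    moreover have "measure N (U \<union> (D - U)) = measure N U + measure N (D - U)"
      using U D C(1) by (intro finite_measure_Union) auto
    ultimately have "measure N (D - U) = 0"
      using U_ge measure_nonneg[of N "D - U"] by linarith
    moreover have "D - U \<in> sets N" using U D C(1) by auto
    ultimately show ?thesis by (simp add: null_sets_def emeasure_eq_measure)
  qed
  with U show ?thesis by blast
qed

text \<open>Every \<open>\<sigma>\<close>-finite measure is equivalent (same measurable sets, same null sets) to a
  finite measure, namely its density with respect to a strictly positive integrable function.\<close>
lemma sigma_finite_equivalent_finite_measure:
  assumes "sigma_finite_measure M"
  obtains N where "finite_measure N" "sets N = sets M" "null_sets N = null_sets M"
proof -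
  interpret sigma_finite_measure M by fact
  obtain h where h: "h \<in> borel_measurable M" "integral\<^sup>N M h \<noteq> \<infinity>"
    and pos: "\<And>x. x \<in> space M \<Longrightarrow> 0 < h x"
    using Ex_finite_integrable_function by auto
  have "(\<integral>\<^sup>+x\<in>space M. h x \<partial>M) = integral\<^sup>N M h"
    by (intro nn_integral_cong) (simp add: indicator_def)
  then have "finite_measure (density M h)"
    using h by (intro finite_measureI) (simp add: emeasure_density)
  moreover have "null_sets (density M h) = null_sets M"
  proof (intro set_eqI iffI)
    fix B assume "B \<in> null_sets (density M h)"
    then have "B \<in> sets M" "AE x in M. x \<in> B \<longrightarrow> h x = 0"
      using null_sets_density_iff[OF h(1)] by auto
    moreover have "AE x in M. x \<notin> B"
      using \<open>AE x in M. x \<in> B \<longrightarrow> h x = 0\<close> AE_space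
    proof eventually_elim
      case (elim x)
      then show ?case using pos[of x] by auto
    qed
    ultimately show "B \<in> null_sets M" by (simp add: AE_iff_null_sets)
  next
    fix B assume B: "B \<in> null_sets M"
    have "AE x in M. x \<in> B \<longrightarrow> h x = 0" using AE_not_in[OF B] by eventually_elim simp
    then show "B \<in> null_sets (density M h)"
      using B by (simp add: null_sets_density_iff[OF h(1)] null_setsD2)
  qed
  ultimately show ?thesis using that by simp
qed

text \<open>Apply the finite case to the countable unions of members of \<open>F\<close>.\<close>
lemma essential_union:
  assumes "sigma_finite_measure M" and F: "F \<subseteq> sets M" "F \<noteq> {}"
  shows "\<exists>A::nat \<Rightarrow> 'a set. range A \<subseteq> F \<and> (\<forall>B\<in>F. B - (\<Union>n. A n) \<in> null_sets M)"
proof -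
  obtain N where N: "finite_measure N" "sets N = sets M" "null_sets N = null_sets M"
    using sigma_finite_equivalent_finite_measure[OF assms(1)] by blast
  define C where "C = (\<lambda>A :: nat \<Rightarrow> 'a set. \<Union>n. A n) ` {A. range A \<subseteq> F}"
  have closed: "(\<Union>n. G n) \<in> C" if G: "range G \<subseteq> C" for G :: "nat \<Rightarrow> 'a set"
  proof -
    have "\<forall>n. \<exists>A :: nat \<Rightarrow> 'a set. range A \<subseteq> F \<and> G n = (\<Union>m. A m)"
      using G unfolding C_def image_subset_iff image_iff by simp
    from choice[OF this] obtain A :: "nat \<Rightarrow> nat \<Rightarrow> 'a set"
      where "\<forall>n. range (A n) \<subseteq> F \<and> G n = (\<Union>m. A n m)" ..
    then have A: "\<And>n. range (A n) \<subseteq> F" "\<And>n. G n = (\<Union>m. A n m)" by simp_all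
    define A' where "A' k = (case prod_decode k of (n, m) \<Rightarrow> A n m)" for k
    have "(\<Union>n. G n) = (\<Union>k. A' k)"
    proof (rule equalityI)
      show "(\<Union>n. G n) \<subseteq> (\<Union>k. A' k)"
      proof
        fix x assume "x \<in> (\<Union>n. G n)"
        then obtain n m where "x \<in> A n m" by (auto simp: A(2))
        then have "x \<in> A' (prod_encode (n, m))" by (simp add: A'_def)
        then show "x \<in> (\<Union>k. A' k)" by blast
      qed
      show "(\<Union>k. A' k) \<subseteq> (\<Union>n. G n)"
        by (auto simp: A'_def A(2) split: prod.splits)
    qed
    moreover have "range A' \<subseteq> F"
      using A(1) by (auto simp: A'_def image_subset_iff split: prod.splits)
    ultimately show ?thesis unfolding C_def by (intro image_eqI[where x = A']) auto
  qed
  have F_C: "F \<subseteq> C"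
  proof
    fix B assume "B \<in> F"
    then show "B \<in> C" unfolding C_def by (intro image_eqI[where x = "\<lambda>_. B"]) auto
  qed
  have "C \<subseteq> sets N"
  proof
    fix D assume "D \<in> C"
    then obtain A :: "nat \<Rightarrow> 'a set" where "range A \<subseteq> F" "D = (\<Union>n. A n)"
      unfolding C_def by auto
    then show "D \<in> sets N" using F(1) unfolding N(2) by (simp add: sets.countable_UN subset_trans)
  qed
  then obtain U where U: "U \<in> C" "\<forall>D\<in>C. D - U \<in> null_sets N"
    using finite_measure_essential_union[OF N(1) _ _ closed] F(2) F_C by blast
  from U(1) obtain A :: "nat \<Rightarrow> 'a set" where "range A \<subseteq> F" "U = (\<Union>n. A n)" unfolding C_def by auto
  then show ?thesis using U(2) F_C N(3) by auto
qed

lemma countable_range_support: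
  assumes "sigma_finite_measure M" and T: "bop M p T"
  shows "\<exists>fs :: nat \<Rightarrow> 'a \<Rightarrow> complex. (\<forall>n. fs n \<in> Lp M p) \<and>
           (\<forall>f \<in> Lp M p. AE x in M. T f x \<noteq> 0 \<longrightarrow> (\<exists>n. T (fs n) x \<noteq> 0))"
proof -
  define supp where "supp f = {x \<in> space M. T f x \<noteq> 0}" for f
  have "supp f \<in> sets M" if "f \<in> Lp M p" for f
    using Lp_measurable[OF bop_Lp[OF T that]] unfolding supp_def by measurable
  then obtain A :: "nat \<Rightarrow> 'a set"
    where A: "range A \<subseteq> supp ` Lp M p" "\<forall>B \<in> supp ` Lp M p. B - (\<Union>n. A n) \<in> null_sets M"
    using essential_union[OF assms(1), of "supp ` Lp M p"] Lp_zero by blast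
  have "\<forall>n. \<exists>f \<in> Lp M p. A n = supp f" using A(1) by (auto simp: image_subset_iff)
  from choice[OF this[unfolded Bex_def]] obtain fs :: "nat \<Rightarrow> 'a \<Rightarrow> complex"
    where fs: "\<forall>n. fs n \<in> Lp M p \<and> A n = supp (fs n)" ..
  show ?thesis
  proof (intro exI[of _ fs] conjI allI ballI)
    show "fs n \<in> Lp M p" for n using fs by simp
    fix f assume "f \<in> Lp M p"
    then have "supp f - (\<Union>n. A n) \<in> null_sets M" using A(2) by blast
    from AE_not_in[OF this] AE_space show "AE x in M. T f x \<noteq> 0 \<longrightarrow> (\<exists>n. T (fs n) x \<noteq> 0)"
      by eventually_elim (auto simp: supp_def fs)
  qed
qed

text \<open>If the generators have pairwise a.e. orthogonal ranges (\<open>S\<^sub>j f \<cdot> S\<^sub>k g = 0\<close> a.e.), the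
  representation is disjoint: take \<open>X\<^sub>j\<close> to be the countable union of supports from
  \<open>countable_range_support\<close>, minus the (null) union of all pairwise overlaps.\<close>
lemma disjoint_rep_of_orthogonal:
  assumes sf: "sigma_finite_measure M" and bops: "\<And>j. j \<in> gens A \<Longrightarrow> bop M p (S j)"
    and orth: "\<And>j k f g. j \<in> gens A \<Longrightarrow> k \<in> gens A \<Longrightarrow> j \<noteq> k \<Longrightarrow> f \<in> Lp M p \<Longrightarrow> g \<in> Lp M p
        \<Longrightarrow> AE x in M. S j f x * S k g x = 0"
  shows "disjoint_rep A M p S"
proof -
  have "\<forall>j \<in> gens A. \<exists>fs :: nat \<Rightarrow> 'a \<Rightarrow> complex. (\<forall>n. fs n \<in> Lp M p) \<and>
          (\<forall>f \<in> Lp M p. AE x in M. S j f x \<noteq> 0 \<longrightarrow> (\<exists>n. S j (fs n) x \<noteq> 0))"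
    by (intro ballI countable_range_support[OF sf bops])
  from bchoice[OF this] obtain fs :: "nat \<Rightarrow> nat \<Rightarrow> 'a \<Rightarrow> complex"
    where fs: "\<forall>j \<in> gens A. (\<forall>n. fs j n \<in> Lp M p) \<and>
          (\<forall>f \<in> Lp M p. AE x in M. S j f x \<noteq> 0 \<longrightarrow> (\<exists>n. S j (fs j n) x \<noteq> 0))" ..
  define U where "U j = {x \<in> space M. \<exists>n. S j (fs j n) x \<noteq> 0}" for j
  have U_sets: "U j \<in> sets M" if j: "j \<in> gens A" for j
  proof -
    have [measurable]: "S j (fs j n) \<in> borel_measurable M" for n
      using fs j by (intro Lp_measurable[of _ M p] bop_Lp[OF bops[OF j]]) auto
    show ?thesis unfolding U_def by measurable
  qed
  define I where "I = {(j, k). j \<in> gens A \<and> k \<in> gens A \<and> j \<noteq> k}"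
  have overlap_null: "U j \<inter> U k \<in> null_sets M" if "(j, k) \<in> I" for j k
  proof -
    have jk: "j \<in> gens A" "k \<in> gens A" "j \<noteq> k" using that by (auto simp: I_def)
    have "AE x in M. S j (fs j n) x * S k (fs k m) x = 0" for n m
      using fs jk by (intro orth) auto
    then have "AE x in M. \<forall>n m. S j (fs j n) x * S k (fs k m) x = 0"
      unfolding AE_all_countable by blast
    then have "AE x in M. x \<notin> U j \<inter> U k" by eventually_elim (auto simp: U_def)
    then show ?thesis using U_sets jk by (simp add: AE_iff_null_sets)
  qed
  define Z where "Z = (\<Union>(j, k) \<in> I. U j \<inter> U k)"
  have Z: "Z \<in> null_sets M"
    unfolding Z_def using overlap_null by (intro null_sets_UN') auto
  show ?thesis unfolding disjoint_rep_def
  proof (intro exI[of _ "\<lambda>j. U j - Z"] conjI ballI)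
    show "U j - Z \<in> sets M" if "j \<in> gens A" for j using U_sets[OF that] Z by auto
    show "disjoint_family_on (\<lambda>j. U j - Z) (gens A)"
      unfolding disjoint_family_on_def Z_def I_def by blast
    fix j f assume "j \<in> gens A" "f \<in> Lp M p"
    then have "AE x in M. S j f x \<noteq> 0 \<longrightarrow> (\<exists>n. S j (fs j n) x \<noteq> 0)" using fs by blast
    with AE_not_in[OF Z] AE_space show "AE x in M. x \<notin> U j - Z \<longrightarrow> S j f x = 0"
      by eventually_elim (auto simp: U_def)
  qed
qed

lemma disjoint_rep_of_unit_orthogonal:
  assumes sf: "sigma_finite_measure M" and p: "0 < p"
    and bops: "\<And>j. j \<in> gens A \<Longrightarrow> bop M p (S j)"
    and unit: "\<And>j k f. j \<in> gens A \<Longrightarrow> k \<in> gens A \<Longrightarrow> j \<noteq> k \<Longrightarrow> f \<in> Lp M p \<Longrightarrow> Lpnorm M p f = 1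
        \<Longrightarrow> AE x in M. S j f x * S k f x = 0"
  shows "disjoint_rep A M p S"
proof (rule disjoint_rep_of_orthogonal[OF sf bops])
  fix j k f g assume jk: "j \<in> gens A" "k \<in> gens A" "j \<noteq> k" and fg: "f \<in> Lp M p" "g \<in> Lp M p"
  have "AE x in M. S j h x * S k h x = 0" if "h \<in> Lp M p" for h
    using orthogonal_of_unit_orthogonal[OF p bops[OF jk(1)] bops[OF jk(2)] unit[OF jk] that] .
  then show "AE x in M. S j f x * S k g x = 0"
    using orthogonal_polarize[OF _ bops[OF jk(1)] bops[OF jk(2)] _ fg] p by simp
qed

theorem lemma7p10:
  fixes A :: alg and M :: "'a measure" and p :: real
    and S T :: "nat \<Rightarrow> ('a \<Rightarrow> complex) \<Rightarrow> ('a \<Rightarrow> complex)"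
  assumes "admissible_alg A"
    and "p \<ge> 1" and "p \<noteq> 2"
    and "sigma_finite_measure M"
    and "is_rep A M p S T"
  shows "(p > 2 \<and> forward_isometric A M p S
            \<and> (\<forall>lam. coeffs A lam \<longrightarrow> opnorm M p (s_lam S lam) \<le> seq_pnorm p lam)
          \<longrightarrow> disjoint_rep A M p S)
       \<and> (p < 2 \<and> strongly_forward_isometric A M p S \<and> p_standard A M p S
          \<longrightarrow> disjoint_rep A M p S)"
proof -
  have p: "0 < p" using assms(2) by simp
  have bops: "\<And>j. j \<in> gens A \<Longrightarrow> bop M p (S j)" using assms(5) by (simp add: is_rep_def)
  note disjoint = disjoint_rep_of_unit_orthogonal[OF assms(4) p bops]
  show ?thesis
  proof (intro conjI impI)
    assume "p > 2 \<and> forward_isometric A M p S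
            \<and> (\<forall>lam. coeffs A lam \<longrightarrow> opnorm M p (s_lam S lam) \<le> seq_pnorm p lam)"
    then show "disjoint_rep A M p S" by (intro disjoint unit_orthogonal_gt2) auto
  next
    assume "p < 2 \<and> strongly_forward_isometric A M p S \<and> p_standard A M p S"
    then show "disjoint_rep A M p S" by (intro disjoint unit_orthogonal_lt2[OF assms(2)]) auto
  qed
qed

end
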